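(* Let $A$ be an $n\times n$ right stochastic matrix with Dobrushin coefficient $\sigma(A)>0$, and let $\{A_k\}_{k\in\mathbb{N}}$ be a sequence of $n\times n$ right stochastic matrices. Let $\mu^*$ be the unique probability vector with $\mu^*=\mu^*A$. For every $\epsilon\in(0,1)$, if \[ \sup_{k\in\mathbb{N}}\|A_k-A\|_\infty\le\frac{\sigma(A)\,\epsilon}{2n}, \] then for every probability (row) vector $\mu_0$ of dimension $n$, \[ \limsup_{k\to\infty}\|\mu_0A_0A_1\cdots A_k-\mu^*\|_1\le\epsilon . \]
   Context: The Dobrushin coefficient of an $n\times n$ right stochastic matrix $A$ is $\sigma(A)=\min_{i,k\in\{1,\dots,n\}}\sum_{j=1}^n\min\{A(i,j),A(k,j)\}\in[0,1]$. $\|M\|_\infty$ denotes the maximum absolute entry (or the induced max-row-sum norm) of a matrix; probability vectors are row vectors and $\|\cdot\|_1$ is the $\ell^1$ norm. *)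

theory Defs
  imports "HOL-Analysis.Analysis"
begin

text \<open>n x n real matrices are represented as real^'n^'n with 'n a finite index type
 (n = CARD('n)); row vectors as real^'n, and the row-vector/matrix product is v* .\<close>

definition right_stochastic :: "real^'n::finite^'n \<Rightarrow> bool" where
  "right_stochastic A \<longleftrightarrow> (\<forall>i j. A $ i $ j \<ge> 0) \<and> (\<forall>i. (\<Sum>j\<in>UNIV. A $ i $ j) = 1)"

definition prob_vector :: "real^'n::finite \<Rightarrow> bool" where
  "prob_vector v \<longleftrightarrow> (\<forall>i. v $ i \<ge> 0) \<and> (\<Sum>i\<in>UNIV. v $ i) = 1"

definition dobrushin :: "real^'n::finite^'n \<Rightarrow> real" where
  "dobrushin A = Min {(\<Sum>j\<in>UNIV. min (A $ i $ j) (A $ k $ j)) | i k. True}"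

definition max_abs_entry :: "real^'n::finite^'n \<Rightarrow> real" where
  "max_abs_entry M = Max {\<bar>M $ i $ j\<bar> | i j. True}"

definition norm1 :: "real^'n::finite \<Rightarrow> real" where
  "norm1 v = (\<Sum>i\<in>UNIV. \<bar>v $ i\<bar>)"

fun left_prod :: "(nat \<Rightarrow> real^'n::finite^'n) \<Rightarrow> nat \<Rightarrow> real^'n^'n" where
  "left_prod As 0 = As 0"
| "left_prod As (Suc k) = left_prod As k ** As (Suc k)"

end

theory Submission
  imports Defs
begin

text \<open>Split a zero-sum vector as x = p - q with p, q \<ge> 0 of equal mass s. Coupling p with q
  writes s (x A) as a nonnegative combination, of total weight s^2, of differences A_i - A_k of
  rows of A, and each of these has l1-norm 2 - 2 \<Sum>_j min (A_ij, A_kj) \<le> 2 (1 - \<sigma>(A)); hence A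
  contracts zero-sum vectors by the factor 1 - \<sigma>(A). Since
  \<mu>_(k+1) - \<mu>* = (\<mu>_k - \<mu>*) A + \<mu>_k (A_(k+1) - A) and the last term has l1-norm at most
  n max_ij |A_(k+1) - A|_ij \<le> \<sigma> \<epsilon> / 2, the error e_k = |\<mu>_k - \<mu>*|_1 obeys
  e_(k+1) \<le> (1 - \<sigma>) e_k + \<sigma> \<epsilon> / 2, so its limit superior is at most \<epsilon> / 2.\<close>

lemma vector_matrix_mult_nth: "(x v* M) $ j = (\<Sum>i\<in>UNIV. x $ i * M $ i $ j)"
  by (simp add: vector_matrix_mult_def)

lemma vector_matrix_mult_eq_sum_rows:
  "x v* (M::real^'n::finite^'m::finite) = (\<Sum>i\<in>UNIV. x $ i *\<^sub>R M $ i)"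
  by (simp add: vec_eq_iff vector_matrix_mult_nth sum_component)

lemma norm1_nonneg: "0 \<le> norm1 x"
  unfolding norm1_def by (simp add: sum_nonneg)

lemma norm1_0 [simp]: "norm1 0 = 0"
  by (simp add: norm1_def)

lemma norm1_eq_0_iff: "norm1 x = 0 \<longleftrightarrow> x = 0"
  unfolding norm1_def by (simp add: sum_nonneg_eq_0_iff vec_eq_iff)

lemma norm1_add: "norm1 (x + y) \<le> norm1 x + norm1 y"
  unfolding norm1_def by (simp add: sum.distrib[symmetric] sum_mono abs_triangle_ineq)

lemma norm1_scaleR: "norm1 (c *\<^sub>R x) = \<bar>c\<bar> * norm1 x"
  unfolding norm1_def by (simp add: abs_mult sum_distrib_left)

lemma norm1_sum_le:
  assumes "finite I"
  shows "norm1 (\<Sum>i\<in>I. f i) \<le> (\<Sum>i\<in>I. norm1 (f i))"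
  using assms
proof (induction I rule: finite_induct)
  case (insert i I)
  then show ?case using norm1_add[of "f i" "sum f I"] by simp
qed simp

lemma norm1_prob_vector: "prob_vector v \<Longrightarrow> norm1 v = 1"
  unfolding norm1_def prob_vector_def by simp

lemma norm1_vector_matrix_mult_le:
  "norm1 (x v* (M::real^'n::finite^'n)) \<le> norm1 x * (real CARD('n) * max_abs_entry M)"
proof -
  have entry_le: "\<bar>M $ i $ j\<bar> \<le> max_abs_entry M" for i j
    unfolding max_abs_entry_def
  proof (rule Max_ge)
    have "{\<bar>M $ i $ j\<bar> | i j. True} = (\<lambda>(i, j). \<bar>M $ i $ j\<bar>) ` UNIV" by auto
    then show "finite {\<bar>M $ i $ j\<bar> | i j. True}" by simp
  qed auto
  have "norm1 (x v* M) \<le> (\<Sum>j\<in>(UNIV::'n set). \<Sum>i\<in>UNIV. \<bar>x $ i\<bar> * max_abs_entry M)"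
    unfolding norm1_def vector_matrix_mult_nth
  proof (rule sum_mono)
    fix j
    have "\<bar>\<Sum>i\<in>UNIV. x $ i * M $ i $ j\<bar> \<le> (\<Sum>i\<in>UNIV. \<bar>x $ i\<bar> * \<bar>M $ i $ j\<bar>)"
      unfolding abs_mult[symmetric] by (rule sum_abs)
    also have "\<dots> \<le> (\<Sum>i\<in>UNIV. \<bar>x $ i\<bar> * max_abs_entry M)"
      by (intro sum_mono mult_left_mono entry_le abs_ge_zero)
    finally show "\<bar>\<Sum>i\<in>UNIV. x $ i * M $ i $ j\<bar> \<le> \<dots>" .
  qed
  also have "\<dots> = norm1 x * (real CARD('n) * max_abs_entry M)"
    by (simp add: norm1_def sum_distrib_left sum_distrib_right mult_ac)
  finally show ?thesis .
qed

lemma prob_vector_vector_matrix_mult: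
  "prob_vector v \<Longrightarrow> right_stochastic A \<Longrightarrow> prob_vector (v v* A)"
  unfolding prob_vector_def right_stochastic_def
  by (auto simp: vector_matrix_mult_nth sum.swap[of _ UNIV UNIV] sum_distrib_left[symmetric]
      intro!: sum_nonneg)

lemma prob_vector_left_prod:
  assumes "prob_vector v" and "\<And>k. right_stochastic (As k)"
  shows "prob_vector (v v* left_prod As k)"
proof (induction k)
  case 0
  then show ?case using assms by (simp add: prob_vector_vector_matrix_mult)
next
  case (Suc k)
  then show ?case
    using assms(2) by (simp add: prob_vector_vector_matrix_mult flip: vector_matrix_mul_assoc)
qed

lemma dobrushin_le: "dobrushin A \<le> (\<Sum>j\<in>UNIV. min (A $ i $ j) (A $ k $ j))"
  unfolding dobrushin_def
proof (rule Min_le)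
  have "{(\<Sum>j\<in>UNIV. min (A $ i $ j) (A $ k $ j)) | i k. True}
      = (\<lambda>(i, k). \<Sum>j\<in>UNIV. min (A $ i $ j) (A $ k $ j)) ` UNIV" by auto
  then show "finite {(\<Sum>j\<in>UNIV. min (A $ i $ j) (A $ k $ j)) | i k. True}" by simp
qed auto

lemma dobrushin_le_1: "right_stochastic A \<Longrightarrow> dobrushin A \<le> 1"
  using dobrushin_le[of A undefined undefined] unfolding right_stochastic_def by simp

lemma norm1_row_diff_le:
  assumes "right_stochastic A"
  shows "norm1 (A $ i - A $ k) \<le> 2 * (1 - dobrushin A)"
proof -
  have "\<bar>a - b\<bar> = a + b - 2 * min a b" for a b :: real
    by (simp add: abs_if min_def)
  then have "norm1 (A $ i - A $ k) = (\<Sum>j\<in>UNIV. A $ i $ j) + (\<Sum>j\<in>UNIV. A $ k $ j)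
      - 2 * (\<Sum>j\<in>UNIV. min (A $ i $ j) (A $ k $ j))"
    by (simp add: norm1_def sum.distrib sum_subtractf sum_distrib_left)
  then show ?thesis
    using assms dobrushin_le[of A i k] unfolding right_stochastic_def by simp
qed

lemma scaleR_sum_eq_coupling:
  fixes r :: "'i \<Rightarrow> 'a::real_vector"
  assumes "finite I" and "sum p I = s" and "sum q I = s"
  shows "s *\<^sub>R (\<Sum>i\<in>I. (p i - q i) *\<^sub>R r i) = (\<Sum>i\<in>I. \<Sum>k\<in>I. (p i * q k) *\<^sub>R (r i - r k))"
proof -
  have "(\<Sum>i\<in>I. \<Sum>k\<in>I. (p i * q k) *\<^sub>R r i) = s *\<^sub>R (\<Sum>i\<in>I. p i *\<^sub>R r i)"
    using assms(3)
    by (simp add: scaleR_sum_right scaleR_sum_left[symmetric] sum_distrib_left[symmetric]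
        mult.commute)
  moreover have "(\<Sum>i\<in>I. \<Sum>k\<in>I. (p i * q k) *\<^sub>R r k) = s *\<^sub>R (\<Sum>k\<in>I. q k *\<^sub>R r k)"
    using assms(2) by (subst sum.swap) (simp add: scaleR_sum_right scaleR_sum_left[symmetric]
        sum_distrib_right[symmetric])
  ultimately show ?thesis
    by (simp add: scaleR_diff_left scaleR_diff_right sum_subtractf)
qed

lemma norm1_vector_matrix_mult_zero_sum_le:
  assumes A: "right_stochastic A" and x: "(\<Sum>i\<in>UNIV. x $ i) = 0"
  shows "norm1 (x v* A) \<le> (1 - dobrushin A) * norm1 x"
proof -
  define p where "p i = max (x $ i) 0" for i
  define q where "q i = max (- x $ i) 0" for i
  define s where "s = sum p UNIV"
  have x_eq: "x $ i = p i - q i" and abs_x_eq: "\<bar>x $ i\<bar> = p i + q i"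
    and pq_nonneg: "0 \<le> p i * q k" for i k
    by (auto simp: p_def q_def max_def)
  have sum_q: "sum q UNIV = s"
    using x unfolding s_def x_eq by (simp add: sum_subtractf)
  have norm1_x: "norm1 x = 2 * s"
    by (simp add: norm1_def abs_x_eq sum.distrib sum_q s_def)
  show ?thesis
  proof (cases "s = 0")
    case True
    then show ?thesis using norm1_x by (simp add: norm1_eq_0_iff)
  next
    case False
    then have "0 < s" using norm1_x norm1_nonneg[of x] by simp
    have "s * norm1 (x v* A) = norm1 (s *\<^sub>R (\<Sum>i\<in>UNIV. (p i - q i) *\<^sub>R A $ i))"
      using \<open>0 < s\<close> by (simp add: norm1_scaleR vector_matrix_mult_eq_sum_rows x_eq)
    also have "\<dots> = norm1 (\<Sum>i\<in>UNIV. \<Sum>k\<in>UNIV. (p i * q k) *\<^sub>R (A $ i - A $ k))"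
      by (simp only: scaleR_sum_eq_coupling[OF finite_class.finite_UNIV s_def[symmetric] sum_q])
    also have "\<dots> \<le> (\<Sum>i\<in>UNIV. \<Sum>k\<in>UNIV. norm1 ((p i * q k) *\<^sub>R (A $ i - A $ k)))"
      by (rule order_trans[OF norm1_sum_le]) (simp_all add: sum_mono norm1_sum_le)
    also have "\<dots> = (\<Sum>i\<in>UNIV. \<Sum>k\<in>UNIV. p i * q k * norm1 (A $ i - A $ k))"
      using pq_nonneg by (simp add: norm1_scaleR)
    also have "\<dots> \<le> (\<Sum>i\<in>UNIV. \<Sum>k\<in>UNIV. p i * q k * (2 * (1 - dobrushin A)))"
      by (intro sum_mono mult_left_mono norm1_row_diff_le A pq_nonneg)
    also have "\<dots> = sum p UNIV * sum q UNIV * (2 * (1 - dobrushin A))"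
      unfolding sum_product by (simp only: sum_distrib_right)
    also have "\<dots> = s * ((1 - dobrushin A) * norm1 x)"
      by (simp add: norm1_x sum_q flip: s_def)
    finally show ?thesis using \<open>0 < s\<close> by simp
  qed
qed

lemma norm1_perturbed_step_le:
  fixes A B :: "real^'n::finite^'n"
  assumes A: "right_stochastic A" and \<mu>: "prob_vector \<mu>"
    and \<nu>: "prob_vector \<nu>" and stationary: "\<nu> v* A = \<nu>"
  shows "norm1 (\<mu> v* B - \<nu>)
    \<le> (1 - dobrushin A) * norm1 (\<mu> - \<nu>) + real CARD('n) * max_abs_entry (B - A)"
proof -
  have split: "\<mu> v* B - \<nu> = (\<mu> - \<nu>) v* A + \<mu> v* (B - A)"
    using stationary by (simp add: vector_matrix_mult_diff_distrib vector_matrix_mult_diff_rdistrib)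
  have "(\<Sum>i\<in>UNIV. (\<mu> - \<nu>) $ i) = 0"
    using \<mu> \<nu> by (simp add: prob_vector_def sum_subtractf)
  then have "norm1 ((\<mu> - \<nu>) v* A) \<le> (1 - dobrushin A) * norm1 (\<mu> - \<nu>)"
    by (rule norm1_vector_matrix_mult_zero_sum_le[OF A])
  moreover have "norm1 (\<mu> v* (B - A)) \<le> real CARD('n) * max_abs_entry (B - A)"
    using norm1_vector_matrix_mult_le[of \<mu> "B - A"] by (simp add: norm1_prob_vector \<mu>)
  ultimately show ?thesis
    unfolding split using norm1_add[of "(\<mu> - \<nu>) v* A" "\<mu> v* (B - A)"] by simp
qed

lemma limsup_le_of_affine_contraction:
  fixes e :: "nat \<Rightarrow> real"
  assumes "0 < \<sigma>" and "\<sigma> \<le> 1" and step: "\<And>k. e (Suc k) \<le> (1 - \<sigma>) * e k + \<sigma> * c"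
  shows "limsup (\<lambda>k. ereal (e k)) \<le> ereal c"
proof -
  have bound: "e k \<le> c + (1 - \<sigma>) ^ k * (e 0 - c)" for k
  proof (induction k)
    case (Suc k)
    have "e (Suc k) - c \<le> (1 - \<sigma>) * (e k - c)"
      using step[of k] by (simp add: algebra_simps)
    also have "\<dots> \<le> (1 - \<sigma>) * ((1 - \<sigma>) ^ k * (e 0 - c))"
      using Suc assms(2) by (intro mult_left_mono) auto
    finally show ?case by simp
  qed simp
  have "(\<lambda>k. c + (1 - \<sigma>) ^ k * (e 0 - c)) \<longlonglongrightarrow> c"
    using assms(1,2) by (auto intro!: tendsto_eq_intros LIMSEQ_power_zero)
  then have "limsup (\<lambda>k. ereal (c + (1 - \<sigma>) ^ k * (e 0 - c))) = ereal c"
    by (intro lim_imp_Limsup) auto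
  moreover have "limsup (\<lambda>k. ereal (e k)) \<le> limsup (\<lambda>k. ereal (c + (1 - \<sigma>) ^ k * (e 0 - c)))"
    using bound by (intro Limsup_mono) auto
  ultimately show ?thesis by simp
qed

theorem lemma4:
  fixes A :: "real^'n::finite^'n" and As :: "nat \<Rightarrow> real^'n^'n"
    and mu_star mu0 :: "real^'n" and \<epsilon> :: real
  assumes "right_stochastic A" and "dobrushin A > 0"
    and "\<forall>k. right_stochastic (As k)"
    and "prob_vector mu_star" and "mu_star = mu_star v* A"
    and "0 < \<epsilon>" and "\<epsilon> < 1"
    and "\<forall>k. max_abs_entry (As k - A) \<le> dobrushin A * \<epsilon> / (2 * real CARD('n))"
    and "prob_vector mu0"
  shows "limsup (\<lambda>k. ereal (norm1 (mu0 v* left_prod As k - mu_star))) \<le> ereal \<epsilon>"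
proof -
  define e where "e k = norm1 (mu0 v* left_prod As k - mu_star)" for k
  have "e (Suc k) \<le> (1 - dobrushin A) * e k + dobrushin A * (\<epsilon> / 2)" for k
  proof -
    have "e (Suc k) \<le> (1 - dobrushin A) * e k + real CARD('n) * max_abs_entry (As (Suc k) - A)"
      unfolding e_def left_prod.simps vector_matrix_mul_assoc[symmetric]
      using assms(3,5,9) by (intro norm1_perturbed_step_le prob_vector_left_prod assms(1,4)) auto
    moreover have "real CARD('n) * max_abs_entry (As (Suc k) - A) \<le> dobrushin A * (\<epsilon> / 2)"
      using assms(8) by (simp add: field_simps)
    ultimately show ?thesis by linarith
  qed
  then have "limsup (\<lambda>k. ereal (e k)) \<le> ereal (\<epsilon> / 2)"
    using assms(2) dobrushin_le_1[OF assms(1)] by (intro limsup_le_of_affine_contraction)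
  also have "\<dots> \<le> ereal \<epsilon>" using assms(6) by simp
  finally show ?thesis by (simp add: e_def)
qed

end
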